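(* Let $L>0$ be even and $A=\{x\in\{0,1\}^L: x_1+\dots+x_L=L/2\}$. Let $g:A\to A$ be an arbitrary function. Then there exist $m>0$ and a Boolean network with inputs $B$, with designated input variables $a=(a_1,\dots,a_L)$, $d=(d_1,d_2)$ and designated output variables $c=(c_1,\dots,c_L)$, such that for every time $t$, every input sequence, and every initial condition of $B$, whenever $a(t)\in A$ we have $c(t+m)=a(t)$ if $d(t)=(0,1)$, and $c(t+m)=g(a(t))$ if $d(t)=(1,0)$. Moreover $B$ is cooperative, every node of its digraph has indegree and outdegree at most $2$, every input variable has indegree $0$ and every output variable has outdegree $0$.
   Context: A Boolean network with inputs consists of finitely many Boolean variables, some designated as input variables whose values at each time are prescribed externally (arbitrarily), and the remaining (internal) variables, each updated simultaneously at each discrete time step by $x(t)=f_x(\text{values of all variables at time } t-1)$ for a Boolean function $f_x$; output variables are designated internal variables. It is cooperative if every update function $f_x$ is monotone nondecreasing with respect to the componentwise order (equivalently, expressible using only $\wedge$ and $\vee$). Its digraph has an arc from variable $y$ to internal variable $x$ iff $f_x$ actually depends on $y$ (flipping $y$ from $0$ to $1$ with all else fixed can raise $f_x$ from $0$ to $1$). *)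

theory Defs
  imports Main
begin

text \<open>A Boolean network with inputs: variables are natural numbers. \<open>Inp\<close> is the
finite set of input variables, \<open>Itn\<close> the finite set of internal variables
(disjoint), and \<open>f v\<close> is the update function of internal variable \<open>v\<close>, acting on
states \<open>nat \<Rightarrow> bool\<close> (only the values on \<open>Inp \<union> Itn\<close> matter).\<close>

definition bn_wf :: "nat set \<Rightarrow> nat set \<Rightarrow> (nat \<Rightarrow> (nat \<Rightarrow> bool) \<Rightarrow> bool) \<Rightarrow> bool" where
  "bn_wf Inp Itn f \<longleftrightarrow> finite Inp \<and> finite Itn \<and> Inp \<inter> Itn = {} \<and>
     (\<forall>v\<in>Itn. \<forall>s s'. (\<forall>y\<in>Inp \<union> Itn. s y = s' y) \<longrightarrow> f v s = f v s')"

text \<open>Trajectories: input values and the initial state are arbitrary; internal variables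
are updated synchronously.\<close>
definition bn_traj :: "nat set \<Rightarrow> (nat \<Rightarrow> (nat \<Rightarrow> bool) \<Rightarrow> bool) \<Rightarrow> (nat \<Rightarrow> nat \<Rightarrow> bool) \<Rightarrow> bool" where
  "bn_traj Itn f x \<longleftrightarrow> (\<forall>t. \<forall>v\<in>Itn. x (Suc t) v = f v (x t))"

definition bn_cooperative :: "nat set \<Rightarrow> (nat \<Rightarrow> (nat \<Rightarrow> bool) \<Rightarrow> bool) \<Rightarrow> bool" where
  "bn_cooperative Itn f \<longleftrightarrow> (\<forall>v\<in>Itn. mono (f v))"

definition bn_arc :: "nat set \<Rightarrow> nat set \<Rightarrow> (nat \<Rightarrow> (nat \<Rightarrow> bool) \<Rightarrow> bool) \<Rightarrow> nat \<Rightarrow> nat \<Rightarrow> bool" where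
  "bn_arc Inp Itn f y v \<longleftrightarrow> y \<in> Inp \<union> Itn \<and> v \<in> Itn \<and>
     (\<exists>s. \<not> f v (s(y := False)) \<and> f v (s(y := True)))"

definition bn_indeg :: "nat set \<Rightarrow> nat set \<Rightarrow> (nat \<Rightarrow> (nat \<Rightarrow> bool) \<Rightarrow> bool) \<Rightarrow> nat \<Rightarrow> nat" where
  "bn_indeg Inp Itn f v = card {y \<in> Inp \<union> Itn. bn_arc Inp Itn f y v}"

definition bn_outdeg :: "nat set \<Rightarrow> nat set \<Rightarrow> (nat \<Rightarrow> (nat \<Rightarrow> bool) \<Rightarrow> bool) \<Rightarrow> nat \<Rightarrow> nat" where
  "bn_outdeg Inp Itn f y = card {v \<in> Itn. bn_arc Inp Itn f y v}"

text \<open>The set A of 0/1 vectors of length L (indices 0..L-1, extended by False) with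
exactly L/2 ones.\<close>
definition balanced_set :: "nat \<Rightarrow> (nat \<Rightarrow> bool) set" where
  "balanced_set L = {z. (\<forall>i\<ge>L. \<not> z i) \<and> card {i. i < L \<and> z i} = L div 2}"

end

theory Submission
  imports Defs "HOL-Library.Nat_Bijection" "HOL-Library.Countable"
begin

(* The network is built as a depth-uniform layered circuit over the
   L data inputs a_i and the two control inputs d1, d2:
   - every input feeds a complete binary "copy tree" of depth 3L+1, so that
     after 3L+2 steps each of its 2^(3L+1) leaves holds the input value;
   - for each output i there is a complete binary "gate tree" of height 2L+1
     whose L lower levels are AND gates and L+1 upper levels are OR gates;
     its root therefore computes a monotone DNF with 2^(L+1) terms of 2^L
     literals, each literal being one input read from a dedicated copy leaf.
   The DNF is chosen as (d2 \<and> a_i) \<or> \<Or>{d1 \<and> \<And>y : y balanced, g y i}, which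
   equals a_i in mode (d1,d2) = (0,1) and g(a) i in mode (1,0) when a is balanced. *)


lemma bn_indeg_non_internal: "v \<notin> Itn \<Longrightarrow> bn_indeg Inp Itn f v = 0"
  by (simp add: bn_indeg_def bn_arc_def)

lemma bn_arc_from_dependency:
  assumes local: "\<And>s s'. (\<And>r. r \<in> D \<Longrightarrow> s r = s' r) \<Longrightarrow> f v s = f v s'"
    and arc: "bn_arc Inp Itn f y v"
  shows "y \<in> D"
proof (rule ccontr)
  assume "y \<notin> D"
  from arc obtain s where "\<not> f v (s(y := False))" "f v (s(y := True))"
    by (auto simp: bn_arc_def)
  moreover have "f v (s(y := False)) = f v (s(y := True))"
    using \<open>y \<notin> D\<close> by (intro local) auto
  ultimately show False by simp
qed


section \<open>Networks on a countable node type\<close>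

text \<open>It is convenient to describe a network on a structured node type and encode the
  nodes as natural numbers afterwards.  \<open>R n\<close> is the set of nodes read by the update
  \<open>F n\<close> of the internal node \<open>n\<close>.\<close>
locale node_network =
  fixes InpN ItnN :: "'n::countable set"
    and F :: "'n \<Rightarrow> ('n \<Rightarrow> bool) \<Rightarrow> bool"
    and R :: "'n \<Rightarrow> 'n set"
  assumes finite_InpN: "finite InpN" and finite_ItnN: "finite ItnN"
    and disjoint: "InpN \<inter> ItnN = {}"
    and deps_closed: "n \<in> ItnN \<Longrightarrow> R n \<subseteq> InpN \<union> ItnN"
    and finite_deps: "finite (R n)"
    and F_local: "n \<in> ItnN \<Longrightarrow> (\<And>r. r \<in> R n \<Longrightarrow> s r = s' r) \<Longrightarrow> F n s = F n s'"
begin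

definition Inp :: "nat set" where "Inp = to_nat ` InpN"
definition Itn :: "nat set" where "Itn = to_nat ` ItnN"
definition upd :: "nat \<Rightarrow> (nat \<Rightarrow> bool) \<Rightarrow> bool" where
  "upd v s = F (from_nat v) (\<lambda>n. s (to_nat n))"

lemma upd_to_nat: "upd (to_nat n) s = F n (\<lambda>m. s (to_nat m))"
  by (simp add: upd_def)

lemma upd_local:
  assumes "n \<in> ItnN" and "\<And>r. r \<in> to_nat ` R n \<Longrightarrow> s r = s' r"
  shows "upd (to_nat n) s = upd (to_nat n) s'"
  unfolding upd_to_nat using assms by (intro F_local) auto

lemma wf: "bn_wf Inp Itn upd"
  unfolding bn_wf_def
proof (intro conjI ballI allI impI)
  show "finite Inp" "finite Itn"
    using finite_InpN finite_ItnN by (simp_all add: Inp_def Itn_def)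
  show "Inp \<inter> Itn = {}"
    using disjoint by (auto simp: Inp_def Itn_def dest: injD[OF inj_to_nat])
  fix v and s s' :: "nat \<Rightarrow> bool" assume "v \<in> Itn" and agree: "\<forall>y\<in>Inp \<union> Itn. s y = s' y"
  then obtain n where n: "v = to_nat n" "n \<in> ItnN" by (auto simp: Itn_def)
  show "upd v s = upd v s'"
    unfolding n(1) using n(2) deps_closed[OF n(2)] agree
    by (intro upd_local) (auto simp: Inp_def Itn_def)
qed

lemma cooperative:
  assumes "\<And>n. n \<in> ItnN \<Longrightarrow> mono (F n)"
  shows "bn_cooperative Itn upd"
  unfolding bn_cooperative_def
proof
  fix v assume "v \<in> Itn"
  then obtain n where n: "v = to_nat n" "n \<in> ItnN" by (auto simp: Itn_def)
  show "mono (upd v)"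
  proof (rule monoI)
    fix s s' :: "nat \<Rightarrow> bool" assume "s \<le> s'"
    then have "(\<lambda>m. s (to_nat m)) \<le> (\<lambda>m. s' (to_nat m))" by (simp add: le_fun_def)
    then show "upd v s \<le> upd v s'"
      unfolding n(1) upd_to_nat by (rule monoD[OF assms[OF n(2)]])
  qed
qed

lemma arc_is_dependency:
  assumes "bn_arc Inp Itn upd y v"
  obtains n where "v = to_nat n" "n \<in> ItnN" "y \<in> to_nat ` R n"
proof -
  from assms obtain n where n: "v = to_nat n" "n \<in> ItnN"
    by (auto simp: bn_arc_def Itn_def)
  have "y \<in> to_nat ` R n"
    using assms unfolding n(1) by (rule bn_arc_from_dependency[rotated]) (rule upd_local[OF n(2)])
  then show thesis using n that by blast
qed

lemma indeg_le:
  assumes "\<And>n. n \<in> ItnN \<Longrightarrow> card (R n) \<le> k"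
  shows "bn_indeg Inp Itn upd v \<le> k"
proof (cases "v \<in> Itn")
  case True
  then obtain n where n: "v = to_nat n" "n \<in> ItnN" by (auto simp: Itn_def)
  have "{y \<in> Inp \<union> Itn. bn_arc Inp Itn upd y v} \<subseteq> to_nat ` R n"
    by (auto elim!: arc_is_dependency simp: n)
  then have "bn_indeg Inp Itn upd v \<le> card (to_nat ` R n)"
    unfolding bn_indeg_def by (intro card_mono) (simp_all add: finite_deps)
  also have "\<dots> \<le> card (R n)" by (rule card_image_le[OF finite_deps])
  finally show ?thesis using assms[OF n(2)] by linarith
qed (simp add: bn_indeg_non_internal)

lemma outdeg_le:
  assumes "finite Out" and "\<And>n. n \<in> ItnN \<Longrightarrow> y \<in> R n \<Longrightarrow> n \<in> Out"
  shows "bn_outdeg Inp Itn upd (to_nat y) \<le> card Out"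
proof -
  have "{v \<in> Itn. bn_arc Inp Itn upd (to_nat y) v} \<subseteq> to_nat ` Out"
    by (auto elim!: arc_is_dependency intro: assms(2) dest: injD[OF inj_to_nat])
  then have "bn_outdeg Inp Itn upd (to_nat y) \<le> card (to_nat ` Out)"
    unfolding bn_outdeg_def by (intro card_mono) (simp_all add: assms(1))
  also have "\<dots> \<le> card Out" by (rule card_image_le[OF assms(1)])
  finally show ?thesis .
qed

lemma input_indeg: "v \<in> Inp \<Longrightarrow> bn_indeg Inp Itn upd v = 0"
  using disjoint
  by (intro bn_indeg_non_internal) (auto simp: Inp_def Itn_def dest: injD[OF inj_to_nat])

lemma traj_step:
  assumes "bn_traj Itn upd x" and "n \<in> ItnN"
  shows "x (Suc t) (to_nat n) = F n (\<lambda>m. x t (to_nat m))"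
  using assms by (simp add: bn_traj_def Itn_def upd_to_nat)

end

section \<open>Bit vectors\<close>

lemma set_encode_lt: "A \<subseteq> {..<L} \<Longrightarrow> set_encode A < 2^L"
proof (induction L arbitrary: A)
  case 0 then show ?case by simp
next
  case (Suc L)
  show ?case
  proof (cases "L \<in> A")
    case True
    have "finite (A - {L})" using Suc.prems finite_subset by blast
    then have "set_encode A = 2^L + set_encode (A - {L})"
      using True by (metis Diff_iff insert_Diff set_encode_insert singletonI)
    moreover have "set_encode (A - {L}) < 2^L"
      using Suc.prems by (intro Suc.IH) (auto simp: less_Suc_eq)
    ultimately show ?thesis by simp
  next
    case False
    then have "A \<subseteq> {..<L}" using Suc.prems by (auto simp: less_Suc_eq)
    then show ?thesis using Suc.IH[of A] by simp
  qed
qed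

definition bits :: "nat \<Rightarrow> nat \<Rightarrow> bool" where
  "bits p = (\<lambda>j. j \<in> set_decode p)"

lemma bits_surj:
  assumes "\<forall>j\<ge>L. \<not> z j"
  obtains p where "p < 2^L" and "bits p = z"
proof
  let ?A = "{j. j < L \<and> z j}"
  show "set_encode ?A < 2^L" by (rule set_encode_lt) auto
  show "bits (set_encode ?A) = z"
    using assms by (auto simp: bits_def not_less[symmetric])
qed

text \<open>Balanced vectors form an antichain: one below another means equality.  This is
  what lets a monotone circuit recognise a balanced input exactly.\<close>
lemma balanced_antichain:
  assumes y: "y \<in> balanced_set L" and z: "z \<in> balanced_set L"
    and le: "\<forall>j<L. y j \<longrightarrow> z j"
  shows "y = z"
proof
  have sub: "{j. j < L \<and> y j} \<subseteq> {j. j < L \<and> z j}" using le by auto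
  have "card {j. j < L \<and> y j} = card {j. j < L \<and> z j}"
    using y z by (simp add: balanced_set_def)
  then have eq: "{j. j < L \<and> y j} = {j. j < L \<and> z j}"
    using card_subset_eq[OF _ sub] by auto
  fix j show "y j = z j"
    using eq y z by (cases "j < L") (auto simp: balanced_set_def)
qed


section \<open>AND/OR trees\<close>

fun gate_tree :: "nat \<Rightarrow> (nat \<Rightarrow> bool) \<Rightarrow> nat \<Rightarrow> nat \<Rightarrow> bool" where
  "gate_tree Q lv 0 j = lv j"
| "gate_tree Q lv (Suc h) j =
    (if Suc h \<le> Q then gate_tree Q lv h (2*j) \<and> gate_tree Q lv h (2*j+1)
     else gate_tree Q lv h (2*j) \<or> gate_tree Q lv h (2*j+1))"

text \<open>The leaves below node \<open>j\<close> at height \<open>h+1\<close> are those below its two children.\<close>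
lemma all_block_split:
  "(\<forall>q::nat<2^Suc h. P (j*2^Suc h + q)) \<longleftrightarrow>
   (\<forall>q<2^h. P (2*j*2^h + q)) \<and> (\<forall>q<2^h. P ((2*j+1)*2^h + q))"
proof -
  have "(\<forall>q<2^Suc h. P (j*2^Suc h + q)) \<longleftrightarrow>
      (\<forall>q<2^h. P (j*2^Suc h + q)) \<and> (\<forall>q<2^h. P (j*2^Suc h + 2^h + q))"
  proof safe
    fix q :: nat
    assume lo: "\<forall>q<2^h. P (j*2^Suc h + q)" and hi: "\<forall>q<2^h. P (j*2^Suc h + 2^h + q)"
      and q: "q < 2^Suc h"
    show "P (j*2^Suc h + q)"
    proof (cases "q < 2^h")
      case False
      then have "q - 2^h < 2^h" "j*2^Suc h + q = j*2^Suc h + 2^h + (q - 2^h)" using q by auto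
      then show ?thesis using hi by metis
    qed (use lo in auto)
  qed (auto simp: add.assoc)
  also have "\<dots> \<longleftrightarrow> (\<forall>q<2^h. P (2*j*2^h + q)) \<and> (\<forall>q<2^h. P ((2*j+1)*2^h + q))"
    by (simp add: algebra_simps)
  finally show ?thesis .
qed

lemma ex_block_split:
  "(\<exists>q::nat<2^Suc h. P (j*2^Suc h + q)) \<longleftrightarrow>
   (\<exists>q<2^h. P (2*j*2^h + q)) \<or> (\<exists>q<2^h. P ((2*j+1)*2^h + q))"
  using all_block_split[of h "\<lambda>x. \<not> P x" j] by blast

lemma gate_tree_and: "h \<le> Q \<Longrightarrow> gate_tree Q lv h j = (\<forall>q<2^h. lv (j*2^h+q))"
proof (induction h arbitrary: j)
  case (Suc h)
  then show ?case using all_block_split[of h lv j] by simp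
qed simp

lemma gate_tree_dnf:
  "gate_tree Q lv (Q+r) j = (\<exists>p<2^r. \<forall>q<2^Q. lv ((j*2^r+p)*2^Q+q))"
proof (induction r arbitrary: j)
  case 0
  then show ?case by (simp add: gate_tree_and)
next
  case (Suc r)
  then show ?case
    using ex_block_split[of r "\<lambda>p. \<forall>q<2^Q. lv (p*2^Q+q)" j] by simp
qed

section \<open>The DNF selecting between identity and \<open>g\<close>\<close>

text \<open>Inputs are numbered \<open>0..L-1\<close> (data), \<open>L\<close> (control \<open>d1\<close>) and \<open>L+1\<close> (control
  \<open>d2\<close>).  \<open>literal L g i p q\<close> is the input read by literal \<open>q < 2^L\<close> of term
  \<open>p < 2^(L+1)\<close> of the DNF for output \<open>i\<close>: term \<open>2^L\<close> is \<open>d2 \<and> a_i\<close>; a term \<open>p\<close> whose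
  digit vector \<open>y\<close> is balanced with \<open>g y i\<close> is \<open>d1 \<and> \<And>{a_j. y j}\<close>; all other terms
  are the never-true \<open>d1 \<and> d2\<close>.  Repeated literals pad every term to length \<open>2^L\<close>.\<close>
definition literal :: "nat \<Rightarrow> ((nat \<Rightarrow> bool) \<Rightarrow> (nat \<Rightarrow> bool)) \<Rightarrow> nat \<Rightarrow> nat \<Rightarrow> nat \<Rightarrow> nat" where
  "literal L g i p q =
    (if p = 2^L then (if q = 0 then L+1 else i)
     else if bits p \<in> balanced_set L \<and> g (bits p) i then (if q < L \<and> bits p q then q else L)
     else (if q = 0 then L else L+1))"

definition selector_dnf :: "nat \<Rightarrow> ((nat \<Rightarrow> bool) \<Rightarrow> (nat \<Rightarrow> bool)) \<Rightarrow> nat \<Rightarrow> (nat \<Rightarrow> bool) \<Rightarrow> bool" where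
  "selector_dnf L g i val = (\<exists>p<2^(L+1). \<forall>q<2^L. val (literal L g i p q))"

lemma literal_lt: "i < L \<Longrightarrow> literal L g i p q < L+2"
  by (simp add: literal_def)

lemma selector_copy_mode:
  assumes "L > 0" and "i < L" and ctrl: "\<not> val L" "val (L+1)"
  shows "selector_dnf L g i val = val i"
proof
  have one: "(1::nat) < 2^L" using \<open>L > 0\<close> less_exp[of L] by linarith
  assume "selector_dnf L g i val"
  then obtain p where p: "\<forall>q<2^L. val (literal L g i p q)" by (auto simp: selector_dnf_def)
  show "val i"
  proof (cases "p = 2^L")
    case True then show ?thesis using p[rule_format, OF one] by (simp add: literal_def)
  next
    case False
    have "L < (2::nat)^L" by simp
    then show ?thesis using p[rule_format, of L] p[rule_format, of 0] False ctrl
      by (auto simp: literal_def split: if_splits)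
  qed
next
  assume "val i"
  then show "selector_dnf L g i val"
    using ctrl unfolding selector_dnf_def by (intro exI[of _ "2^L"]) (auto simp: literal_def)
qed

text \<open>In mode \<open>(d1,d2) = (1,0)\<close> the DNF returns \<open>g z i\<close> on a balanced data vector
  \<open>z\<close>: the only true term is the one whose digit vector equals \<open>z\<close>.\<close>
lemma selector_apply_mode:
  assumes "L > 0" and "i < L" and z: "z \<in> balanced_set L"
    and data: "\<forall>j<L. val j = z j" and ctrl: "val L" "\<not> val (L+1)"
  shows "selector_dnf L g i val = g z i"
proof
  have one: "(1::nat) < 2^L" using \<open>L > 0\<close> less_exp[of L] by linarith
  assume "selector_dnf L g i val"
  then obtain p where p: "\<forall>q<2^L. val (literal L g i p q)" by (auto simp: selector_dnf_def)
  show "g z i"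
  proof (cases "p \<noteq> 2^L \<and> bits p \<in> balanced_set L \<and> g (bits p) i")
    case True
    have "\<forall>j<L. bits p j \<longrightarrow> z j"
    proof (intro allI impI)
      fix j assume j: "j < L" "bits p j"
      have "j < 2^L" using j(1) less_exp[of L] by linarith
      then show "z j" using p[rule_format, of j] True j data by (simp add: literal_def)
    qed
    then have "bits p = z" using balanced_antichain True z by blast
    then show ?thesis using True by simp
  next
    case False
    then show ?thesis using p[rule_format, OF one] p[rule_format, of 0] ctrl
      by (auto simp: literal_def split: if_splits)
  qed
next
  assume gz: "g z i"
  obtain p where p: "p < 2^L" "bits p = z"
    using z by (auto simp: balanced_set_def elim: bits_surj)
  have "\<forall>q<2^L. val (literal L g i p q)"
    using p gz z data ctrl by (auto simp: literal_def)
  then show "selector_dnf L g i val"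
    using p(1) unfolding selector_dnf_def by (intro exI[of _ p]) simp
qed

section \<open>The circuit\<close>

text \<open>\<open>Src y\<close> is input \<open>y < L+2\<close>.  \<open>Copy y k j\<close> is node \<open>j < 2^k\<close> at depth
  \<open>k \<le> 3L+1\<close> of the copy tree of input \<open>y\<close>.  \<open>Gate i h j\<close> is node \<open>j < 2^(2L+1-h)\<close> at
  height \<open>h \<le> 2L+1\<close> of the gate tree of output \<open>i < L\<close>; its leaf \<open>j\<close> reads the copy leaf
  with index \<open>i*2^(2L+1) + j\<close> (below \<open>2^(3L+1)\<close>), so no copy leaf is read twice.\<close>
datatype node = Src nat | Copy nat nat nat | Gate nat nat nat

instance node :: countable by countable_datatype

definition leaf_input :: "nat \<Rightarrow> ((nat \<Rightarrow> bool) \<Rightarrow> (nat \<Rightarrow> bool)) \<Rightarrow> nat \<Rightarrow> nat \<Rightarrow> nat" where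
  "leaf_input L g i j = literal L g i (j div 2^L) (j mod 2^L)"

fun upd_node :: "nat \<Rightarrow> ((nat \<Rightarrow> bool) \<Rightarrow> (nat \<Rightarrow> bool)) \<Rightarrow> node \<Rightarrow> (node \<Rightarrow> bool) \<Rightarrow> bool" where
  "upd_node L g (Src y) s = False"
| "upd_node L g (Copy y k j) s = s (if k = 0 then Src y else Copy y (k-1) (j div 2))"
| "upd_node L g (Gate i 0 j) s = s (Copy (leaf_input L g i j) (3*L+1) (i*2^(2*L+1) + j))"
| "upd_node L g (Gate i (Suc h) j) s =
    (if Suc h \<le> L then s (Gate i h (2*j)) \<and> s (Gate i h (2*j+1))
     else s (Gate i h (2*j)) \<or> s (Gate i h (2*j+1)))"

fun deps :: "nat \<Rightarrow> ((nat \<Rightarrow> bool) \<Rightarrow> (nat \<Rightarrow> bool)) \<Rightarrow> node \<Rightarrow> node set" where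
  "deps L g (Src y) = {}"
| "deps L g (Copy y k j) = {if k = 0 then Src y else Copy y (k-1) (j div 2)}"
| "deps L g (Gate i 0 j) = {Copy (leaf_input L g i j) (3*L+1) (i*2^(2*L+1) + j)}"
| "deps L g (Gate i (Suc h) j) = {Gate i h (2*j), Gate i h (2*j+1)}"

fun readers :: "nat \<Rightarrow> node \<Rightarrow> node set" where
  "readers L (Src y) = {Copy y 0 0}"
| "readers L (Copy y k j) =
    (if k < 3*L+1 then {Copy y (k+1) (2*j), Copy y (k+1) (2*j+1)}
     else {Gate (j div 2^(2*L+1)) 0 (j mod 2^(2*L+1))})"
| "readers L (Gate i h j) = (if h < 2*L+1 then {Gate i (Suc h) (j div 2)} else {})"

definition input_nodes :: "nat \<Rightarrow> node set" where
  "input_nodes L = Src ` {..<L+2}"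

definition internal_nodes :: "nat \<Rightarrow> node set" where
  "internal_nodes L =
     {Copy y k j | y k j. y < L+2 \<and> k \<le> 3*L+1 \<and> j < 2^k}
   \<union> {Gate i h j | i h j. i < L \<and> h \<le> 2*L+1 \<and> j < 2^(2*L+1-h)}"

lemma finite_internal_nodes: "finite (internal_nodes L)"
proof -
  have "internal_nodes L \<subseteq>
      (\<lambda>(y,k,j). Copy y k j) ` ({..<L+2} \<times> {..3*L+1} \<times> {..<2^(3*L+1)})
    \<union> (\<lambda>(i,h,j). Gate i h j) ` ({..<L} \<times> {..2*L+1} \<times> {..<2^(2*L+1)})" (is "_ \<subseteq> ?B")
  proof
    fix n assume "n \<in> internal_nodes L"
    then consider y k j where "n = Copy y k j" "y < L+2" "k \<le> 3*L+1" "j < 2^k"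
      | i h j where "n = Gate i h j" "i < L" "h \<le> 2*L+1" "j < 2^(2*L+1-h)"
      unfolding internal_nodes_def by blast
    then show "n \<in> ?B"
    proof cases
      case 1
      then have "j < 2^(3*L+1)"
        using power_increasing[of k "3*L+1" "2::nat"] by (meson less_le_trans one_le_numeral)
      then show ?thesis using 1 by (auto intro!: image_eqI[of _ _ "(y,k,j)"])
    next
      case 2
      then have "j < 2^(2*L+1)"
        using power_increasing[of "2*L+1-h" "2*L+1" "2::nat"]
        by (meson diff_le_self less_le_trans one_le_numeral)
      then show ?thesis using 2 by (auto intro!: image_eqI[of _ _ "(i,h,j)"])
    qed
  qed
  then show ?thesis by (rule finite_subset) auto
qed

lemma leaf_input_lt: "i < L \<Longrightarrow> leaf_input L g i j < L+2"
  unfolding leaf_input_def by (rule literal_lt)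

lemma copy_index_bound:
  assumes "i < L" "j < 2^(2*L+1)"
  shows "i*2^(2*L+1) + j < 2^(3*L+1)"
proof -
  have "i*2^(2*L+1) + j < (i+1)*2^(2*L+1)" using assms by simp
  also have "\<dots> \<le> L * 2^(2*L+1)" using assms(1) by (intro mult_right_mono) auto
  also have "\<dots> \<le> 2^L * 2^(2*L+1)" by (intro mult_right_mono) (auto intro: less_imp_le)
  also have "\<dots> = 2^(3*L+1)" by (simp add: power_add[symmetric])
  finally show ?thesis .
qed

lemma deps_closed:
  assumes n: "n \<in> internal_nodes L"
  shows "deps L g n \<subseteq> input_nodes L \<union> internal_nodes L"
proof (cases "(L,g,n)" rule: deps.cases)
  case (2 L' g' y k j)
  then show ?thesis using n
    by (auto simp: internal_nodes_def input_nodes_def less_mult_imp_div_less)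
      (metis Suc_pred less_mult_imp_div_less power_Suc2)
next
  case (3 L' g' i j)
  then show ?thesis using n leaf_input_lt[of i L g j] copy_index_bound[of i L j]
    by (auto simp: internal_nodes_def input_nodes_def)
next
  case (4 L' g' i h j)
  then have h: "h \<le> 2*L" "j < 2^(2*L-h)" "i < L" using n by (auto simp: internal_nodes_def)
  then have "2*j+1 < 2^(2*L+1-h)" by (simp add: Suc_diff_le)
  then show ?thesis using 4 h by (auto simp: internal_nodes_def)
qed auto

lemma circuit_network:
  "node_network (input_nodes L) (internal_nodes L) (upd_node L g) (deps L g)"
proof
  show "finite (input_nodes L)" by (simp add: input_nodes_def)
  show "finite (internal_nodes L)" by (rule finite_internal_nodes)
  show "input_nodes L \<inter> internal_nodes L = {}" by (auto simp: input_nodes_def internal_nodes_def)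
  show "deps L g n \<subseteq> input_nodes L \<union> internal_nodes L" if "n \<in> internal_nodes L" for n
    using that by (rule deps_closed)
  show "finite (deps L g n)" for n by (cases "(L,g,n)" rule: deps.cases) auto
  show "upd_node L g n s = upd_node L g n s'" if "\<And>r. r \<in> deps L g n \<Longrightarrow> s r = s' r" for n s s'
    using that by (cases "(L,g,n,s)" rule: upd_node.cases) auto
qed

lemma upd_node_mono: "mono (upd_node L g n)"
  by (cases "(L,g,n)" rule: deps.cases) (auto simp: mono_def le_fun_def)

lemma card_deps: "card (deps L g n) \<le> 2"
  by (cases "(L,g,n)" rule: deps.cases) (auto simp: card_insert_if)

lemma card_readers: "card (readers L n) \<le> 2"
  by (cases "(L,n)" rule: readers.cases) (auto simp: card_insert_if)

lemma finite_readers: "finite (readers L n)"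
  by (cases "(L,n)" rule: readers.cases) auto

lemma deps_readers:
  assumes n: "n \<in> internal_nodes L" and y: "y \<in> deps L g n"
  shows "n \<in> readers L y"
  using n y by (cases "(L,g,n)" rule: deps.cases) (auto simp: internal_nodes_def split: if_splits)

interpretation circuit: node_network "input_nodes L" "internal_nodes L" "upd_node L g" "deps L g"
  for L g
  by (rule circuit_network)

lemma circuit_outdeg:
  "bn_outdeg (circuit.Inp L) (circuit.Itn L) (circuit.upd L g) (to_nat y) \<le> card (readers L y)"
  by (rule circuit.outdeg_le) (auto intro: finite_readers deps_readers)

lemma circuit_degrees:
  assumes "v \<in> circuit.Inp L \<union> circuit.Itn L"
  shows "bn_indeg (circuit.Inp L) (circuit.Itn L) (circuit.upd L g) v \<le> 2
    \<and> bn_outdeg (circuit.Inp L) (circuit.Itn L) (circuit.upd L g) v \<le> 2"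
proof -
  obtain y :: node where "v = to_nat y"
    using assms unfolding circuit.Inp_def circuit.Itn_def by blast
  then show ?thesis
    using circuit.indeg_le[OF card_deps] circuit_outdeg[of L g y] card_readers[of L y] by simp
qed

lemma circuit_output_outdeg:
  "bn_outdeg (circuit.Inp L) (circuit.Itn L) (circuit.upd L g) (to_nat (Gate i (2*L+1) 0)) = 0"
  using circuit_outdeg[of L g "Gate i (2*L+1) 0"] by simp


section \<open>Dynamics of the circuit\<close>

locale circuit_trajectory =
  fixes L :: nat and g :: "(nat \<Rightarrow> bool) \<Rightarrow> (nat \<Rightarrow> bool)" and X :: "nat \<Rightarrow> node \<Rightarrow> bool"
  assumes step: "n \<in> internal_nodes L \<Longrightarrow> X (Suc t) n = upd_node L g n (X t)"
begin

lemma copy_delay: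
  assumes "y < L+2" "k \<le> 3*L+1" "j < 2^k"
  shows "X (t + k + 1) (Copy y k j) = X t (Src y)"
  using assms
proof (induction k arbitrary: j)
  case 0
  then have "Copy y 0 j \<in> internal_nodes L" by (auto simp: internal_nodes_def)
  then show ?case using step by simp
next
  case (Suc k)
  then have "Copy y (Suc k) j \<in> internal_nodes L" by (auto simp: internal_nodes_def)
  then have "X (t + Suc k + 1) (Copy y (Suc k) j) = X (t + k + 1) (Copy y k (j div 2))"
    using step[of "Copy y (Suc k) j" "t + k + 1"] by simp
  also have "\<dots> = X t (Src y)"
    using Suc by (intro Suc.IH) (auto simp: less_mult_imp_div_less)
  finally show ?case .
qed

lemma gate_value:
  assumes "i < L" "h \<le> 2*L+1" "j < 2^(2*L+1-h)"
  shows "X (t + (3*L+3) + h) (Gate i h j) = gate_tree L (\<lambda>j. X t (Src (leaf_input L g i j))) h j"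
  using assms
proof (induction h arbitrary: j)
  case 0
  then have node: "Gate i 0 j \<in> internal_nodes L" by (auto simp: internal_nodes_def)
  have time: "t + (3*L+3) + 0 = Suc (t + (3*L+1) + 1)" by simp
  have "X (t + (3*L+3) + 0) (Gate i 0 j)
      = X (t + (3*L+1) + 1) (Copy (leaf_input L g i j) (3*L+1) (i*2^(2*L+1) + j))"
    unfolding time using node by (simp add: step)
  also have "\<dots> = X t (Src (leaf_input L g i j))"
    using 0 by (intro copy_delay leaf_input_lt copy_index_bound) auto
  finally show ?case by simp
next
  case (Suc h)
  then have node: "Gate i (Suc h) j \<in> internal_nodes L" by (auto simp: internal_nodes_def)
  have "2*L+1-h = Suc (2*L+1-Suc h)" using Suc.prems by simp
  then have "2*j < 2^(2*L+1-h)" "2*j+1 < 2^(2*L+1-h)" using Suc.prems by auto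
  then show ?case
    using step[OF node, of "t + (3*L+3) + h"] Suc.IH[of "2*j"] Suc.IH[of "2*j+1"] Suc.prems
    by simp
qed

lemma output_value:
  assumes "i < L"
  shows "X (t + (5*L+4)) (Gate i (2*L+1) 0) = selector_dnf L g i (\<lambda>y. X t (Src y))"
proof -
  let ?leaves = "\<lambda>j. X t (Src (leaf_input L g i j))"
  have time: "t + (5*L+4) = t + (3*L+3) + (2*L+1)" by simp
  have "X (t + (5*L+4)) (Gate i (2*L+1) 0) = gate_tree L ?leaves (2*L+1) 0"
    unfolding time using assms by (intro gate_value) auto
  also have "\<dots> = gate_tree L ?leaves (L + (L+1)) 0"
    by (simp only: mult_2 add.assoc)
  also have "\<dots> = (\<exists>p<2^(L+1). \<forall>q<2^L. ?leaves (p*2^L+q))"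
    by (simp only: gate_tree_dnf mult_0 add_0)
  also have "\<dots> = selector_dnf L g i (\<lambda>y. X t (Src y))"
    by (simp add: selector_dnf_def leaf_input_def)
  finally show ?thesis .
qed

end

theorem lemma5:
  fixes L :: nat and g :: "(nat \<Rightarrow> bool) \<Rightarrow> (nat \<Rightarrow> bool)"
  assumes "L > 0" and "even L"
    and "\<forall>z\<in>balanced_set L. g z \<in> balanced_set L"
  shows "\<exists>(m::nat) Inp Itn f (a::nat \<Rightarrow> nat) d1 d2 (c::nat \<Rightarrow> nat).
    m > 0 \<and> bn_wf Inp Itn f \<and>
    inj_on a {..<L} \<and> d1 \<noteq> d2 \<and> d1 \<notin> a ` {..<L} \<and> d2 \<notin> a ` {..<L} \<and>
    Inp = a ` {..<L} \<union> {d1, d2} \<and>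
    inj_on c {..<L} \<and> c ` {..<L} \<subseteq> Itn \<and>
    (\<forall>x t. bn_traj Itn f x \<longrightarrow>
       (\<lambda>i. if i < L then x t (a i) else False) \<in> balanced_set L \<longrightarrow>
       ((\<not> x t d1 \<and> x t d2) \<longrightarrow> (\<forall>i<L. x (t + m) (c i) = x t (a i))) \<and>
       ((x t d1 \<and> \<not> x t d2) \<longrightarrow>
          (\<forall>i<L. x (t + m) (c i) = g (\<lambda>j. if j < L then x t (a j) else False) i))) \<and>
    bn_cooperative Itn f \<and>
    (\<forall>v\<in>Inp \<union> Itn. bn_indeg Inp Itn f v \<le> 2 \<and> bn_outdeg Inp Itn f v \<le> 2) \<and>
    (\<forall>v\<in>Inp. bn_indeg Inp Itn f v = 0) \<and>
    (\<forall>i<L. bn_outdeg Inp Itn f (c i) = 0)"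
proof -
  define a where "a = (\<lambda>i. to_nat (Src i))"
  define d1 where "d1 = to_nat (Src L)"
  define d2 where "d2 = to_nat (Src (L+1))"
  define c where "c = (\<lambda>i. to_nat (Gate i (2*L+1) 0))"
  have io_behaviour: "(\<not> x t d1 \<and> x t d2 \<longrightarrow> (\<forall>i<L. x (t + (5*L+4)) (c i) = x t (a i))) \<and>
      (x t d1 \<and> \<not> x t d2 \<longrightarrow>
        (\<forall>i<L. x (t + (5*L+4)) (c i) = g (\<lambda>j. if j < L then x t (a j) else False) i))"
    if traj: "bn_traj (circuit.Itn L) (circuit.upd L g) x"
      and bal: "(\<lambda>i. if i < L then x t (a i) else False) \<in> balanced_set L" for x t
  proof -
    interpret T: circuit_trajectory L g "\<lambda>t n. x t (to_nat n)"
      by unfold_locales (simp add: circuit.traj_step[OF traj])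
    let ?val = "\<lambda>y. x t (to_nat (Src y))"
    have out: "x (t + (5*L+4)) (c i) = selector_dnf L g i ?val" if "i < L" for i
      using T.output_value[OF that] by (simp add: c_def)
    show ?thesis
      using out selector_copy_mode[OF \<open>L > 0\<close>, of _ ?val g]
        selector_apply_mode[OF \<open>L > 0\<close> _ bal, of _ ?val g]
      by (simp add: a_def d1_def d2_def)
  qed
  show ?thesis
  proof (intro exI conjI)
    show "5*L+4 > (0::nat)" by simp
    show "inj_on a {..<L}" "inj_on c {..<L}" by (simp_all add: a_def c_def inj_on_def)
    show "d1 \<noteq> d2" "d1 \<notin> a ` {..<L}" "d2 \<notin> a ` {..<L}" by (auto simp: d1_def d2_def a_def)
    show "circuit.Inp L = a ` {..<L} \<union> {d1, d2}" unfolding circuit.Inp_def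
      by (auto simp: input_nodes_def a_def d1_def d2_def image_iff less_Suc_eq)
    show "c ` {..<L} \<subseteq> circuit.Itn L" unfolding circuit.Itn_def
      by (auto simp: c_def internal_nodes_def)
    show "bn_cooperative (circuit.Itn L) (circuit.upd L g)"
      by (rule circuit.cooperative[OF upd_node_mono])
  qed (use io_behaviour circuit.wf circuit_degrees circuit.input_indeg circuit_output_outdeg
       in \<open>auto simp: c_def\<close>)
qed

end
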